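(* An integer sequence $(a_n)_{n\ge1}$ is a strong Euler–Gauss sequence if and only if $\left(\frac{a_{p^rm}}{\gcd(a_{p^rm},a_{p^{r-1}m})}\right)^{-1}\equiv\left(\frac{a_{p^{r-1}m}}{\gcd(a_{p^rm},a_{p^{r-1}m})}\right)^{-1}\pmod{p^r}$ for all primes $p$ and all integers $r\ge1$, $m\ge1$.
   Context: $\mu$ is the Möbius function; $x^{-1}$ denotes the inverse of $x$ modulo the relevant modulus (the quotients are required to be invertible). For an integer sequence $(a_n)$ and $n\ge1$, $A_n^+=\prod_{d\mid n,\ \mu(d)=1} a_{n/d}$ and $A_n^-=\prod_{d\mid n,\ \mu(d)=-1} a_{n/d}$ (empty products equal $1$). An integer sequence is a strong Euler–Gauss sequence if for all $n\ge1$, $\left(\frac{A_n^-}{\gcd(A_n^+,A_n^-)}\right)^{-1}\equiv\left(\frac{A_n^+}{\gcd(A_n^+,A_n^-)}\right)^{-1}\pmod n$. *)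

theory Defs
  imports "HOL-Number_Theory.Number_Theory" "HOL-Computational_Algebra.Squarefree"
begin

definition moebius :: "nat \<Rightarrow> int" where
  "moebius d = (if d = 0 then 0 else if squarefree d then (-1) ^ card (prime_factors d) else 0)"

definition A_plus :: "(nat \<Rightarrow> int) \<Rightarrow> nat \<Rightarrow> int" where
  "A_plus a n = (\<Prod>d \<in> {d. d dvd n \<and> moebius d = 1}. a (n div d))"

definition A_minus :: "(nat \<Rightarrow> int) \<Rightarrow> nat \<Rightarrow> int" where
  "A_minus a n = (\<Prod>d \<in> {d. d dvd n \<and> moebius d = -1}. a (n div d))"

text \<open>x^{-1} = y^{-1} (mod n), both inverses required to exist.\<close>
definition inv_cong :: "int \<Rightarrow> int \<Rightarrow> int \<Rightarrow> bool" where
  "inv_cong x y n \<longleftrightarrow> (\<exists>u v. [x * u = 1] (mod n) \<and> [y * v = 1] (mod n) \<and> [u = v] (mod n))"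

definition strong_euler_gauss :: "(nat \<Rightarrow> int) \<Rightarrow> bool" where
  "strong_euler_gauss a \<longleftrightarrow>
     (\<forall>n\<ge>1. let g = gcd (A_plus a n) (A_minus a n) in
        inv_cong (A_minus a n div g) (A_plus a n div g) (int n))"

end

theory Submission
  imports Defs
begin

(* For nonzero x and y, the condition on the reduced fraction x/y in both statements says that
   x/y is congruent to 1 modulo N as a quotient of two units mod N (ratio_cong below); in this
   form it is multiplicative, cancellative and local at the prime powers dividing N.  Both
   conditions force a_k \<noteq> 0, since a vanishing term makes some reduced fraction 0 modulo some
   n \<ge> 2.  For n = p^r m with p not dividing m, the squarefree divisors of n are e and p e with
   e | m, and \<mu>(p e) = -\<mu>(e); so A^+_n / A^-_n is the product over e | m of
   (a_{p^r m/e} / a_{p^{r-1} m/e})^\<mu>(e).  Hence the local congruences give A^+_n \<equiv> A^-_n modulo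
   every prime power exactly dividing n.  Conversely, strong induction on m (Moebius inversion)
   isolates the factor e = 1, and a general m is reduced to this case by moving its p-part into
   p^r. *)

definition ratio_cong :: "int \<Rightarrow> int \<Rightarrow> int \<Rightarrow> bool" where
  "ratio_cong x y N \<longleftrightarrow> (\<exists>s t. coprime s N \<and> coprime t N \<and> x * t = y * s \<and> [s = t] (mod N))"

lemma inv_cong_iff: "inv_cong x y N \<longleftrightarrow> coprime x N \<and> coprime y N \<and> [x = y] (mod N)"
proof
  assume "inv_cong x y N"
  then obtain u v where u: "[x * u = 1] (mod N)" and v: "[y * v = 1] (mod N)"
    and uv: "[u = v] (mod N)"
    unfolding inv_cong_def by blast
  have "[x = x * (y * v)] (mod N)" using cong_mult[OF cong_refl[of x] v] by (simp add: cong_sym)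
  also have "[x * (y * v) = x * (y * u)] (mod N)"
    by (intro cong_mult cong_refl) (simp add: uv cong_sym)
  also have "x * (y * u) = y * (x * u)" by simp
  also have "[y * (x * u) = y * 1] (mod N)" by (intro cong_mult cong_refl u)
  finally show "coprime x N \<and> coprime y N \<and> [x = y] (mod N)"
    using u v coprime_iff_invertible_int by auto
next
  assume xy: "coprime x N \<and> coprime y N \<and> [x = y] (mod N)"
  then obtain u where u: "[x * u = 1] (mod N)" using cong_solve_coprime_int by blast
  have "[y * u = x * u] (mod N)" using xy by (intro cong_mult cong_refl) (simp add: cong_sym)
  with u have "[y * u = 1] (mod N)" using cong_trans by blast
  with u show "inv_cong x y N" unfolding inv_cong_def using cong_refl by blast
qed

lemma inv_cong_div_gcd_iff_ratio_cong:
  assumes "x \<noteq> 0" "y \<noteq> 0"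
  shows "inv_cong (x div gcd x y) (y div gcd x y) N \<longleftrightarrow> ratio_cong x y N"
proof -
  define x' y' where "x' = x div gcd x y" and "y' = y div gcd x y"
  have x: "x = gcd x y * x'" and y: "y = gcd x y * y'" unfolding x'_def y'_def by simp_all
  have "gcd x y \<noteq> 0" using assms by simp
  have "coprime x' y'" unfolding x'_def y'_def using assms div_gcd_coprime by blast
  have "x' \<noteq> 0" using x assms by auto
  show ?thesis unfolding x'_def[symmetric] y'_def[symmetric] inv_cong_iff
  proof
    assume "coprime x' N \<and> coprime y' N \<and> [x' = y'] (mod N)"
    moreover have "x * y' = y * x'" using x y by (metis mult.assoc mult.commute)
    ultimately show "ratio_cong x y N" unfolding ratio_cong_def by blast
  next
    assume "ratio_cong x y N"
    then obtain s t where s: "coprime s N" and t: "coprime t N" and st: "x * t = y * s"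
      and "[s = t] (mod N)"
      unfolding ratio_cong_def by blast
    have "x' * t = y' * s" using st x y \<open>gcd x y \<noteq> 0\<close> by (metis mult.assoc mult_cancel_left)
    then have "x' dvd s" using \<open>coprime x' y'\<close> by (metis coprime_dvd_mult_right_iff dvd_triv_left)
    then obtain k where k: "s = x' * k" by blast
    with \<open>x' * t = y' * s\<close> \<open>x' \<noteq> 0\<close> have "t = y' * k" by (simp add: mult.left_commute)
    with k s t \<open>[s = t] (mod N)\<close> show "coprime x' N \<and> coprime y' N \<and> [x' = y'] (mod N)"
      using cong_mult_rcancel by auto
  qed
qed

lemma inv_cong_div_gcd_imp_nonzero:
  assumes "inv_cong (x div gcd x y) (y div gcd x y) N" "N > 1"
  shows "x \<noteq> 0" "y \<noteq> 0"
  using assms by (auto simp: inv_cong_iff)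

lemma ratio_cong_sym: "ratio_cong x y N \<Longrightarrow> ratio_cong y x N"
  unfolding ratio_cong_def by (metis cong_sym mult.commute)

lemma ratio_cong_mult:
  assumes "ratio_cong x1 y1 N" "ratio_cong x2 y2 N"
  shows "ratio_cong (x1 * x2) (y1 * y2) N"
proof -
  obtain s1 t1 where 1: "coprime s1 N" "coprime t1 N" "x1 * t1 = y1 * s1" "[s1 = t1] (mod N)"
    using assms(1) unfolding ratio_cong_def by blast
  obtain s2 t2 where 2: "coprime s2 N" "coprime t2 N" "x2 * t2 = y2 * s2" "[s2 = t2] (mod N)"
    using assms(2) unfolding ratio_cong_def by blast
  have "x1 * x2 * (t1 * t2) = y1 * y2 * (s1 * s2)"
    by (metis 1(3) 2(3) mult.assoc mult.left_commute)
  with 1 2 show ?thesis unfolding ratio_cong_def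
    by (intro exI[of _ "s1 * s2"] exI[of _ "t1 * t2"]) (auto intro: cong_mult)
qed

lemma ratio_cong_cancel:
  assumes "ratio_cong (x1 * x2) (y1 * y2) N" "ratio_cong x2 y2 N" "x2 \<noteq> 0"
  shows "ratio_cong x1 y1 N"
proof -
  obtain s t where 1: "coprime s N" "coprime t N" "x1 * x2 * t = y1 * y2 * s" "[s = t] (mod N)"
    using assms(1) unfolding ratio_cong_def by blast
  obtain s' t' where 2: "coprime s' N" "coprime t' N" "x2 * t' = y2 * s'" "[s' = t'] (mod N)"
    using assms(2) unfolding ratio_cong_def by blast
  have "x2 * (x1 * (t * s')) = x1 * x2 * t * s'" by simp
  also have "\<dots> = y1 * (y2 * s') * s" using 1(3) by simp
  also have "\<dots> = x2 * (y1 * (s * t'))" using 2(3) by simp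
  finally have "x1 * (t * s') = y1 * (s * t')" using assms(3) by simp
  moreover have "[s * t' = t * s'] (mod N)"
    using 1(4) 2(4) by (metis cong_mult cong_sym mult.commute)
  ultimately show ?thesis using 1 2 unfolding ratio_cong_def
    by (intro exI[of _ "s * t'"] exI[of _ "t * s'"]) auto
qed

lemma ratio_cong_prod:
  "(\<And>i. i \<in> S \<Longrightarrow> ratio_cong (f i) (g i) N) \<Longrightarrow> ratio_cong (\<Prod>i\<in>S. f i) (\<Prod>i\<in>S. g i) N"
proof (induction S rule: infinite_finite_induct)
  case (insert i S)
  then show ?case by (simp add: ratio_cong_mult)
qed (auto simp: ratio_cong_def intro!: exI[of _ 1])

lemma ratio_cong_dvd_modulus: "ratio_cong x y N \<Longrightarrow> M dvd N \<Longrightarrow> ratio_cong x y M"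
  unfolding ratio_cong_def by (meson cong_dvd_modulus coprime_divisors dvd_refl)

lemma ratio_cong_prime_power_factors:
  assumes "x \<noteq> 0" "y \<noteq> 0" "n \<noteq> 0"
    and local: "\<And>p. p \<in> prime_factors n \<Longrightarrow> ratio_cong x y (int (p ^ multiplicity p n))"
  shows "ratio_cong x y (int n)"
proof -
  define x' y' where "x' = x div gcd x y" and "y' = y div gcd x y"
  define q where "q p = int (p ^ multiplicity p n)" for p
  have "int n = (\<Prod>p\<in>prime_factors n. q p)"
    unfolding q_def using prod_prime_factors[OF \<open>n \<noteq> 0\<close>] by (simp flip: of_nat_prod of_nat_power)
  moreover have "coprime x' (q p)" "coprime y' (q p)" "[x' = y'] (mod q p)"
    if "p \<in> prime_factors n" for p
    using local[OF that] assms(1,2)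
    unfolding x'_def y'_def q_def
    by (simp_all add: inv_cong_div_gcd_iff_ratio_cong[symmetric] inv_cong_iff)
  moreover have "coprime (q p) (q p')"
    if "p \<in> prime_factors n" "p' \<in> prime_factors n" "p \<noteq> p'" for p p'
    using that primes_coprime[of p p'] unfolding q_def
    by (auto simp: coprime_power_left_iff coprime_power_right_iff in_prime_factors_iff)
  ultimately have "coprime x' (int n) \<and> coprime y' (int n) \<and> [x' = y'] (mod int n)"
    by (auto intro: prod_coprime_right cong_cong_prod_coprime)
  then show ?thesis
    using assms(1,2) unfolding x'_def y'_def
    by (simp add: inv_cong_div_gcd_iff_ratio_cong[symmetric] inv_cong_iff)
qed

lemma moebius_prime_mult:
  assumes p: "prime p" and "\<not> p dvd e"
  shows "moebius (p * e) = - moebius e"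
proof -
  have "e \<noteq> 0" "p \<noteq> 0" using assms by (auto intro: gr0I)
  have "coprime p e" using assms by (simp add: prime_imp_coprime)
  then have "squarefree (p * e) \<longleftrightarrow> squarefree e"
    using squarefree_multD[of p e] squarefree_mult_coprime squarefree_prime[OF p] by blast
  moreover have "prime_factors (p * e) = insert p (prime_factors e)"
    using prime_factors_product[OF \<open>p \<noteq> 0\<close> \<open>e \<noteq> 0\<close>] p by (simp add: prime_prime_factors)
  moreover have "p \<notin> prime_factors e" using assms by auto
  ultimately show ?thesis unfolding moebius_def using \<open>e \<noteq> 0\<close> \<open>p \<noteq> 0\<close> by simp
qed

lemma moebius_1: "moebius 1 = 1"
  unfolding moebius_def by simp

lemma moebius_prime: "prime p \<Longrightarrow> moebius p = -1"
  using moebius_prime_mult[of p 1]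
  by (metis moebius_1 mult.right_neutral nat_dvd_1_iff_1 not_prime_1)

lemma divisors_moebius_prime_power_mult:
  fixes p m r :: nat and c :: int
  assumes p: "prime p" and "\<not> p dvd m" "r \<ge> 1" "c \<noteq> 0"
  shows "{d. d dvd p ^ r * m \<and> moebius d = c} =
         {e. e dvd m \<and> moebius e = c} \<union> (*) p ` {e. e dvd m \<and> moebius e = -c}"
proof -
  have pr: "p ^ r = p * p ^ (r - 1)" using \<open>r \<ge> 1\<close> by (simp add: power_eq_if)
  show ?thesis
  proof (intro equalityI subsetI)
    fix d assume "d \<in> {d. d dvd p ^ r * m \<and> moebius d = c}"
    then have d: "d dvd p ^ r * m" "moebius d = c" by auto
    show "d \<in> {e. e dvd m \<and> moebius e = c} \<union> (*) p ` {e. e dvd m \<and> moebius e = -c}"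
    proof (cases "p dvd d")
      case True
      then obtain e where de: "d = p * e" by blast
      have "\<not> p dvd e"
      proof
        assume "p dvd e"
        then have "p * p dvd d" using de by simp
        moreover have "squarefree d"
          using d(2) \<open>c \<noteq> 0\<close> unfolding moebius_def by (auto split: if_splits)
        ultimately show False
          using p unfolding squarefree_def by (metis not_prime_unit power2_eq_square)
      qed
      have "e dvd p ^ (r - 1) * m" using d(1) de pr p by (simp add: mult.assoc prime_gt_0_nat)
      moreover have "coprime e (p ^ (r - 1))"
        using \<open>\<not> p dvd e\<close> p by (metis coprime_commute coprime_power_right_iff prime_imp_coprime)
      ultimately have "e dvd m" using coprime_dvd_mult_right_iff by blast
      moreover have "moebius e = -c" using d(2) de moebius_prime_mult[OF p \<open>\<not> p dvd e\<close>] by simp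
      ultimately show ?thesis using de by blast
    next
      case False
      then have "coprime d (p ^ r)"
        using p by (metis coprime_commute coprime_power_right_iff prime_imp_coprime)
      then show ?thesis using d coprime_dvd_mult_right_iff by blast
    qed
  next
    fix d assume "d \<in> {e. e dvd m \<and> moebius e = c} \<union> (*) p ` {e. e dvd m \<and> moebius e = -c}"
    then consider "d dvd m" "moebius d = c" | e where "d = p * e" "e dvd m" "moebius e = -c"
      by blast
    then show "d \<in> {d. d dvd p ^ r * m \<and> moebius d = c}"
    proof cases
      case 2
      have "\<not> p dvd e" using 2 \<open>\<not> p dvd m\<close> dvd_trans by blast
      then show ?thesis using 2 pr moebius_prime_mult[OF p] by (simp add: mult.assoc mult_dvd_mono)
    qed auto
  qed
qed

lemma prod_divisors_moebius_prime_power_mult: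
  fixes p m r :: nat and c :: int and f :: "nat \<Rightarrow> 'a :: comm_monoid_mult"
  assumes p: "prime p" and "\<not> p dvd m" "r \<ge> 1" "c \<noteq> 0"
  shows "(\<Prod>d\<in>{d. d dvd p ^ r * m \<and> moebius d = c}. f (p ^ r * m div d)) =
         (\<Prod>e\<in>{e. e dvd m \<and> moebius e = c}. f (p ^ r * (m div e))) *
         (\<Prod>e\<in>{e. e dvd m \<and> moebius e = -c}. f (p ^ (r - 1) * (m div e)))"
proof -
  have "m > 0" using \<open>\<not> p dvd m\<close> by (auto intro: gr0I)
  have "p > 0" using p prime_gt_0_nat by blast
  have pr: "p ^ r = p * p ^ (r - 1)" using \<open>r \<ge> 1\<close> by (simp add: power_eq_if)
  have "{e. e dvd m \<and> moebius e = c} \<inter> (*) p ` {e. e dvd m \<and> moebius e = -c} = {}"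
    using \<open>\<not> p dvd m\<close> by (auto dest: dvd_mult_left)
  moreover have "inj_on ((*) p) {e. e dvd m \<and> moebius e = -c}"
    using \<open>p > 0\<close> by (auto simp: inj_on_def)
  ultimately show ?thesis
    unfolding divisors_moebius_prime_power_mult[OF assms]
    using \<open>m > 0\<close> \<open>p > 0\<close> pr
    by (simp add: prod.union_disjoint prod.reindex div_mult_swap mult.assoc)
qed

lemma A_plus_prime_power_mult:
  assumes "prime p" "\<not> p dvd m" "r \<ge> 1"
  shows "A_plus a (p ^ r * m) =
         (\<Prod>e\<in>{e. e dvd m \<and> moebius e = 1}. a (p ^ r * (m div e))) *
         (\<Prod>e\<in>{e. e dvd m \<and> moebius e = -1}. a (p ^ (r - 1) * (m div e)))"
  unfolding A_plus_def using prod_divisors_moebius_prime_power_mult[OF assms, of 1] by simp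

lemma A_minus_prime_power_mult:
  assumes "prime p" "\<not> p dvd m" "r \<ge> 1"
  shows "A_minus a (p ^ r * m) =
         (\<Prod>e\<in>{e. e dvd m \<and> moebius e = -1}. a (p ^ r * (m div e))) *
         (\<Prod>e\<in>{e. e dvd m \<and> moebius e = 1}. a (p ^ (r - 1) * (m div e)))"
  unfolding A_minus_def using prod_divisors_moebius_prime_power_mult[OF assms, of "-1"] by simp

lemma prod_divisors_eq_0_iff:
  fixes n :: nat and f :: "nat \<Rightarrow> 'a :: {semidom}"
  assumes "n \<noteq> 0"
  shows "(\<Prod>d\<in>{d. d dvd n \<and> P d}. f (n div d)) = 0 \<longleftrightarrow> (\<exists>d. d dvd n \<and> P d \<and> f (n div d) = 0)"
  using assms by (subst prod_zero_iff) auto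

lemma A_plus_nonzero: "\<forall>k\<ge>1. a k \<noteq> 0 \<Longrightarrow> n \<noteq> 0 \<Longrightarrow> A_plus a n \<noteq> 0"
  unfolding A_plus_def by (subst prod_divisors_eq_0_iff) (auto elim!: dvdE)

lemma A_minus_nonzero: "\<forall>k\<ge>1. a k \<noteq> 0 \<Longrightarrow> n \<noteq> 0 \<Longrightarrow> A_minus a n \<noteq> 0"
  unfolding A_minus_def by (subst prod_divisors_eq_0_iff) (auto elim!: dvdE)

lemma strong_euler_gauss_iff_ratio_cong:
  "strong_euler_gauss a \<longleftrightarrow>
     (\<forall>k\<ge>1. a k \<noteq> 0) \<and> (\<forall>n\<ge>1. ratio_cong (A_plus a n) (A_minus a n) (int n))"
proof
  assume seg: "strong_euler_gauss a"
  have inv: "inv_cong (A_minus a n div gcd (A_minus a n) (A_plus a n))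
      (A_plus a n div gcd (A_minus a n) (A_plus a n)) (int n)" if "n \<ge> 1" for n
    using seg that unfolding strong_euler_gauss_def Let_def by (simp add: gcd.commute)
  have A_nonzero: "A_plus a n \<noteq> 0" "A_minus a n \<noteq> 0" if "n \<ge> 2" for n
    using inv_cong_div_gcd_imp_nonzero[OF inv] that by auto
  have nz: "\<forall>k\<ge>1. a k \<noteq> 0"
  proof (intro allI impI)
    fix k :: nat assume "k \<ge> 1"
    show "a k \<noteq> 0"
    proof (cases "k = 1")
      case True
      then show ?thesis
        using A_nonzero(2)[of 2] moebius_prime[of 2] unfolding A_minus_def
        by (auto simp: prod_divisors_eq_0_iff dest: spec[of _ 2])
    next
      case False
      then have "k \<noteq> 0" "A_plus a k \<noteq> 0" using A_nonzero(1) \<open>k \<ge> 1\<close> by auto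
      then show ?thesis
        unfolding A_plus_def using prod_divisors_eq_0_iff[of k a "\<lambda>d. moebius d = 1"]
        by (metis div_by_1 moebius_1 one_dvd)
    qed
  qed
  show "(\<forall>k\<ge>1. a k \<noteq> 0) \<and> (\<forall>n\<ge>1. ratio_cong (A_plus a n) (A_minus a n) (int n))"
    using nz inv A_plus_nonzero A_minus_nonzero
    by (auto simp: inv_cong_div_gcd_iff_ratio_cong intro: ratio_cong_sym)
next
  assume "(\<forall>k\<ge>1. a k \<noteq> 0) \<and> (\<forall>n\<ge>1. ratio_cong (A_plus a n) (A_minus a n) (int n))"
  then show "strong_euler_gauss a"
    unfolding strong_euler_gauss_def Let_def
    using A_plus_nonzero A_minus_nonzero
    by (auto simp: gcd.commute inv_cong_div_gcd_iff_ratio_cong intro: ratio_cong_sym)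
qed

lemma reduced_inv_cong_prime_powers_iff_ratio_cong:
  "(\<forall>p r m. prime p \<and> r \<ge> 1 \<and> m \<ge> 1 \<longrightarrow>
      (let g = gcd (a (p ^ r * m)) (a (p ^ (r - 1) * m)) in
        inv_cong (a (p ^ r * m) div g) (a (p ^ (r - 1) * m) div g) (int (p ^ r)))) \<longleftrightarrow>
   (\<forall>k\<ge>1. a k \<noteq> 0) \<and>
   (\<forall>p r m. prime p \<and> r \<ge> 1 \<and> m \<ge> 1 \<longrightarrow>
      ratio_cong (a (p ^ r * m)) (a (p ^ (r - 1) * m)) (int (p ^ r)))"
proof -
  let ?inv = "\<lambda>p r m. let g = gcd (a (p ^ r * m)) (a (p ^ (r - 1) * m)) in
    inv_cong (a (p ^ r * m) div g) (a (p ^ (r - 1) * m) div g) (int (p ^ r))"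
  let ?rat = "\<lambda>p r m. ratio_cong (a (p ^ r * m)) (a (p ^ (r - 1) * m)) (int (p ^ r))"
  have inv_iff_rat: "?inv p r m \<longleftrightarrow> ?rat p r m"
    if "\<forall>k\<ge>1. a k \<noteq> 0" "prime p" "m \<ge> 1" for p r m :: nat
  proof -
    have "p ^ j * m \<ge> 1" for j using that(2,3) prime_gt_0_nat by (simp add: Suc_le_eq)
    then show ?thesis using that(1) unfolding Let_def by (simp add: inv_cong_div_gcd_iff_ratio_cong)
  qed
  have nonzero: "\<forall>k\<ge>1. a k \<noteq> 0" if "\<forall>p r m. prime p \<and> r \<ge> 1 \<and> m \<ge> 1 \<longrightarrow> ?inv p r m"
  proof (intro allI impI)
    fix k :: nat assume "k \<ge> 1"
    then have "?inv 2 1 k" using that two_is_prime_nat by blast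
    then show "a k \<noteq> 0"
      using inv_cong_div_gcd_imp_nonzero(2)[of "a (2 * k)" "a k" 2] by (simp add: Let_def)
  qed
  show ?thesis
  proof
    assume inv: "\<forall>p r m. prime p \<and> r \<ge> 1 \<and> m \<ge> 1 \<longrightarrow> ?inv p r m"
    have "?rat p r m" if prm: "prime p \<and> r \<ge> 1 \<and> m \<ge> 1" for p r m
      using inv_iff_rat[OF nonzero[OF inv], of p m r] inv[rule_format, OF prm] prm by blast
    with nonzero[OF inv] show "(\<forall>k\<ge>1. a k \<noteq> 0) \<and> (\<forall>p r m. prime p \<and> r \<ge> 1 \<and> m \<ge> 1 \<longrightarrow> ?rat p r m)"
      by blast
  next
    assume "(\<forall>k\<ge>1. a k \<noteq> 0) \<and> (\<forall>p r m. prime p \<and> r \<ge> 1 \<and> m \<ge> 1 \<longrightarrow> ?rat p r m)"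
    then show "\<forall>p r m. prime p \<and> r \<ge> 1 \<and> m \<ge> 1 \<longrightarrow> ?inv p r m"
      using inv_iff_rat by blast
  qed
qed

lemma ratio_cong_A_plus_A_minus:
  assumes nz: "\<forall>k\<ge>1. a k \<noteq> 0"
    and local: "\<forall>p r m. prime p \<and> r \<ge> 1 \<and> m \<ge> 1 \<longrightarrow>
      ratio_cong (a (p ^ r * m)) (a (p ^ (r - 1) * m)) (int (p ^ r))"
    and "n \<noteq> 0"
  shows "ratio_cong (A_plus a n) (A_minus a n) (int n)"
proof (rule ratio_cong_prime_power_factors)
  fix p assume "p \<in> prime_factors n"
  then have p: "prime p" and r: "multiplicity p n \<ge> 1"
    using \<open>n \<noteq> 0\<close> by (auto simp: prime_factors_multiplicity)
  obtain m where n: "n = p ^ multiplicity p n * m" and "\<not> p dvd m"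
    using multiplicity_decompose' p \<open>n \<noteq> 0\<close> not_prime_unit by metis
  define r where "r = multiplicity p n"
  define P where "P j c = (\<Prod>e\<in>{e. e dvd m \<and> moebius e = c}. a (p ^ j * (m div e)))" for j c
  have "m \<noteq> 0" using \<open>\<not> p dvd m\<close> by (auto intro: gr0I)
  have P: "ratio_cong (P r c) (P (r - 1) c) (int (p ^ r))" for c
    unfolding P_def
  proof (intro ratio_cong_prod)
    fix e assume "e \<in> {e. e dvd m \<and> moebius e = c}"
    then have "m div e \<ge> 1" using \<open>m \<noteq> 0\<close> by (auto simp: Suc_le_eq elim!: dvdE)
    then show "ratio_cong (a (p ^ r * (m div e))) (a (p ^ (r - 1) * (m div e))) (int (p ^ r))"
      using local p r unfolding r_def by blast
  qed
  have "ratio_cong (P r 1 * P (r - 1) (-1)) (P (r - 1) 1 * P r (-1)) (int (p ^ r))"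
    using ratio_cong_mult[OF P ratio_cong_sym[OF P]] .
  then show "ratio_cong (A_plus a n) (A_minus a n) (int (p ^ multiplicity p n))"
    using A_plus_prime_power_mult[OF p \<open>\<not> p dvd m\<close> r, of a]
      A_minus_prime_power_mult[OF p \<open>\<not> p dvd m\<close> r, of a] n
    by (simp add: P_def r_def mult.commute)
qed (use nz \<open>n \<noteq> 0\<close> A_plus_nonzero A_minus_nonzero in auto)

lemma ratio_cong_A_imp_prime_power_coprime:
  assumes nz: "\<forall>k\<ge>1. a k \<noteq> 0"
    and A: "\<forall>n\<ge>1. ratio_cong (A_plus a n) (A_minus a n) (int n)"
    and p: "prime p" and r: "r \<ge> 1"
  shows "m \<noteq> 0 \<Longrightarrow> \<not> p dvd m \<Longrightarrow>
    ratio_cong (a (p ^ r * m)) (a (p ^ (r - 1) * m)) (int (p ^ r))"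
proof (induction m rule: less_induct)
  case (less m)
  have IH: "ratio_cong (a (p ^ r * (m div e))) (a (p ^ (r - 1) * (m div e))) (int (p ^ r))"
    if "e dvd m" "e \<noteq> 1" for e
  proof (rule less.IH)
    from that less.prems show "m div e < m" "m div e \<noteq> 0" "\<not> p dvd m div e"
      by (auto elim!: dvdE)
  qed
  define S where "S c = {e. e dvd m \<and> moebius e = c}" for c :: int
  define P where "P j T = (\<Prod>e\<in>T. a (p ^ j * (m div e)))" for j T
  have "finite (S 1)" using less.prems(1) by (auto simp: S_def)
  moreover have "1 \<in> S 1" by (simp add: S_def moebius_def)
  ultimately
  have remove_1: "P j (S 1) = a (p ^ j * m) * P j (S 1 - {1})" for j
    unfolding P_def by (simp add: prod.remove)
  have "A_plus a (p ^ r * m) = P r (S 1) * P (r - 1) (S (-1))"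
    "A_minus a (p ^ r * m) = P r (S (-1)) * P (r - 1) (S 1)"
    unfolding S_def P_def
    using A_plus_prime_power_mult[OF p less.prems(2) r]
      A_minus_prime_power_mult[OF p less.prems(2) r]
    by simp_all
  then have A_plus:
      "A_plus a (p ^ r * m) = a (p ^ r * m) * (P r (S 1 - {1}) * P (r - 1) (S (-1)))"
    and A_minus:
      "A_minus a (p ^ r * m) = a (p ^ (r - 1) * m) * (P (r - 1) (S 1 - {1}) * P r (S (-1)))"
    by (simp_all add: remove_1 ac_simps)
  have P: "ratio_cong (P r T) (P (r - 1) T) (int (p ^ r))" if "T \<subseteq> {e. e dvd m \<and> e \<noteq> 1}" for T
    unfolding P_def using that IH by (intro ratio_cong_prod) auto
  have "S 1 - {1} \<subseteq> {e. e dvd m \<and> e \<noteq> 1}" "S (-1) \<subseteq> {e. e dvd m \<and> e \<noteq> 1}"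
    using moebius_1 unfolding S_def by fastforce+
  then have cofactor: "ratio_cong (P r (S 1 - {1}) * P (r - 1) (S (-1)))
      (P (r - 1) (S 1 - {1}) * P r (S (-1))) (int (p ^ r))"
    by (intro ratio_cong_mult P ratio_cong_sym[OF P])
  have "p ^ r * m \<ge> 1" using less.prems(1) p by (simp add: Suc_le_eq prime_gt_0_nat)
  then have "ratio_cong (A_plus a (p ^ r * m)) (A_minus a (p ^ r * m)) (int (p ^ r * m))"
    using A by blast
  then have "ratio_cong (A_plus a (p ^ r * m)) (A_minus a (p ^ r * m)) (int (p ^ r))"
    by (rule ratio_cong_dvd_modulus) simp
  moreover have "A_plus a (p ^ r * m) \<noteq> 0"
    using A_plus_nonzero[OF nz] less.prems(1) p by (simp add: prime_gt_0_nat)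
  ultimately show ?case
    unfolding A_plus A_minus using ratio_cong_cancel[OF _ cofactor] by simp
qed

lemma ratio_cong_A_imp_prime_power:
  assumes nz: "\<forall>k\<ge>1. a k \<noteq> 0"
    and A: "\<forall>n\<ge>1. ratio_cong (A_plus a n) (A_minus a n) (int n)"
    and p: "prime p" and "r \<ge> 1" "m \<ge> 1"
  shows "ratio_cong (a (p ^ r * m)) (a (p ^ (r - 1) * m)) (int (p ^ r))"
proof -
  obtain m' where m: "m = p ^ multiplicity p m * m'" and "\<not> p dvd m'"
    using multiplicity_decompose' p \<open>m \<ge> 1\<close> not_prime_unit by (metis not_one_le_zero)
  define s where "s = multiplicity p m"
  have "m' \<noteq> 0" using \<open>\<not> p dvd m'\<close> by (auto intro: gr0I)
  have "ratio_cong (a (p ^ (r + s) * m')) (a (p ^ (r + s - 1) * m')) (int (p ^ (r + s)))"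
    using ratio_cong_A_imp_prime_power_coprime[OF nz A p, of "r + s" m']
      \<open>r \<ge> 1\<close> \<open>m' \<noteq> 0\<close> \<open>\<not> p dvd m'\<close>
    by simp
  moreover have "r + s - 1 = (r - 1) + s" using \<open>r \<ge> 1\<close> by simp
  then have "p ^ r * m = p ^ (r + s) * m'" "p ^ (r - 1) * m = p ^ (r + s - 1) * m'"
    using m by (simp_all add: s_def power_add mult.assoc)
  moreover have "int (p ^ r) dvd int (p ^ (r + s))" by (simp add: power_add)
  ultimately show ?thesis using ratio_cong_dvd_modulus by metis
qed

theorem lemma1:
  fixes a :: "nat \<Rightarrow> int"
  shows "strong_euler_gauss a \<longleftrightarrow>
    (\<forall>p r m. prime p \<and> r \<ge> 1 \<and> m \<ge> 1 \<longrightarrow>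
      (let g = gcd (a (p ^ r * m)) (a (p ^ (r - 1) * m)) in
        inv_cong (a (p ^ r * m) div g) (a (p ^ (r - 1) * m) div g) (int (p ^ r))))"
proof -
  have "(\<forall>n\<ge>1. ratio_cong (A_plus a n) (A_minus a n) (int n)) \<longleftrightarrow>
      (\<forall>p r m. prime p \<and> r \<ge> 1 \<and> m \<ge> 1 \<longrightarrow>
        ratio_cong (a (p ^ r * m)) (a (p ^ (r - 1) * m)) (int (p ^ r)))"
    if nz: "\<forall>k\<ge>1. a k \<noteq> 0"
    using ratio_cong_A_plus_A_minus[OF nz] ratio_cong_A_imp_prime_power[OF nz] by auto
  then show ?thesis
    unfolding strong_euler_gauss_iff_ratio_cong reduced_inv_cong_prime_powers_iff_ratio_cong
    by blast
qed

end
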